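(* Let $\lambda=\sigma\Lambda+r\gamma\in W\Lambda$ ($\sigma\in S_n$, $\gamma\in Q$) and let $\alpha$ be a positive root. Then $(\lambda,\lambda^\alpha)$ is admissible if and only if one of the following holds: (i) $(\sigma\Lambda,\alpha)>0$, and for every decomposition $\alpha=\beta+\gamma'$ with $\beta,\gamma'$ positive roots, $(\sigma\Lambda,\beta)<0$ or $(\sigma\Lambda,\gamma')<0$; (ii) $(\sigma\Lambda,\alpha)<0$, and for every decomposition $\alpha=\beta+\gamma'$ with $\beta,\gamma'$ positive roots, $(\sigma\Lambda,\beta)<0$ and $(\sigma\Lambda,\gamma')<0$.
   Context: Fix integers $n\ge2$, $r\ge n+2$. $\varepsilon_1,\dots,\varepsilon_n$ orthonormal basis of $\mathbb R^n$ with inner product $(\cdot,\cdot)$; $\bar\varepsilon_i=\varepsilon_i-\frac1n\sum_j\varepsilon_j$, $P=\sum_i\mathbb Z\bar\varepsilon_i$, $\alpha_i=\varepsilon_i-\varepsilon_{i+1}$, $Q=\sum_i\mathbb Z\alpha_i$, $\theta=\alpha_1+\dots+\alpha_{n-1}$; positive roots $\varepsilon_i-\varepsilon_j$ ($i<j$). Fix $\Lambda\in P$ with $(\Lambda,\alpha_i)>0$ for all $i$ and $(\Lambda,\theta)<r$. $S_n$ permutes the $\varepsilon_i$; $\ell(\sigma)$ is the length. Every element of $W\Lambda=\{\sigma\Lambda+r\gamma:\sigma\in S_n,\gamma\in Q\}$ has a unique such expression, and $\deg(\sigma\Lambda+r\gamma)=\ell(\sigma)-2|\gamma|$ with $|\sum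 c_i\alpha_i|=\sum c_i$. For a positive root $\alpha$, $m_\alpha(\lambda)$ is the integer with $0<m_\alpha(\lambda)<r$, $m_\alpha(\lambda)\equiv(\lambda,\alpha)\bmod r$; $\lambda^\alpha=\lambda-m_\alpha(\lambda)\alpha$. The pair $(\lambda,\lambda^\alpha)$ is admissible if $\deg\lambda^\alpha=\deg\lambda+1$. *)

theory Defs
  imports Complex_Main "HOL-Combinatorics.Permutations"
begin

text \<open>Vectors of R^n are functions nat => real, coordinates indexed by 0..n-1
  (standard basis eps 0, ..., eps (n-1)); all vectors used vanish outside {..<n}.\<close>

type_synonym vec = "nat \<Rightarrow> real"

definition eps :: "nat \<Rightarrow> vec" where
  "eps i = (\<lambda>j. if j = i then 1 else 0)"

definition ip :: "nat \<Rightarrow> vec \<Rightarrow> vec \<Rightarrow> real" where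
  "ip n x y = (\<Sum>j<n. x j * y j)"

definition epsbar :: "nat \<Rightarrow> nat \<Rightarrow> vec" where
  "epsbar n i = (\<lambda>j. eps i j - (1 / real n) * (\<Sum>k<n. eps k j))"

definition alpha :: "nat \<Rightarrow> vec" where
  "alpha i = (\<lambda>j. eps i j - eps (Suc i) j)"

definition Pl :: "nat \<Rightarrow> vec set" where
  "Pl n = {x. \<exists>c::nat \<Rightarrow> int. x = (\<lambda>j. \<Sum>i<n. of_int (c i) * epsbar n i j)}"

definition Ql :: "nat \<Rightarrow> vec set" where
  "Ql n = {x. \<exists>c::nat \<Rightarrow> int. x = (\<lambda>j. \<Sum>i<n-1. of_int (c i) * alpha i j)}"

definition theta :: "nat \<Rightarrow> vec" where
  "theta n = (\<lambda>j. \<Sum>i<n-1. alpha i j)"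

definition qheight :: "nat \<Rightarrow> vec \<Rightarrow> int" where
  "qheight n g = (THE h. \<exists>c::nat \<Rightarrow> int. g = (\<lambda>j. \<Sum>i<n-1. of_int (c i) * alpha i j)
                            \<and> h = (\<Sum>i<n-1. c i))"

text \<open>S_n acts by permuting the eps_i: act s (eps i) = eps (s i).\<close>
definition act :: "(nat \<Rightarrow> nat) \<Rightarrow> vec \<Rightarrow> vec" where
  "act s x = (\<lambda>j. x (inv s j))"

definition perm_length :: "nat \<Rightarrow> (nat \<Rightarrow> nat) \<Rightarrow> nat" where
  "perm_length n s = card {(i, j). i < j \<and> j < n \<and> s j < s i}"

definition affW_orbit :: "nat \<Rightarrow> nat \<Rightarrow> vec \<Rightarrow> vec set" where
  "affW_orbit n r L = {(\<lambda>j. act s L j + real r * g j) | s g. s permutes {..<n} \<and> g \<in> Ql n}"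

definition deg :: "nat \<Rightarrow> nat \<Rightarrow> vec \<Rightarrow> vec \<Rightarrow> int" where
  "deg n r L lam = (THE d. \<exists>s g. s permutes {..<n} \<and> g \<in> Ql n \<and>
       lam = (\<lambda>j. act s L j + real r * g j) \<and> d = int (perm_length n s) - 2 * qheight n g)"

definition posroots :: "nat \<Rightarrow> vec set" where
  "posroots n = {(\<lambda>k. eps i k - eps j k) | i j. i < j \<and> j < n}"

definition mval :: "nat \<Rightarrow> nat \<Rightarrow> vec \<Rightarrow> vec \<Rightarrow> int" where
  "mval n r a lam = (THE m::int. 0 < m \<and> m < int r \<and>
       (\<exists>k::int. ip n lam a = real_of_int m + real_of_int k * real r))"

definition refl_alpha :: "nat \<Rightarrow> nat \<Rightarrow> vec \<Rightarrow> vec \<Rightarrow> vec" where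
  "refl_alpha n r a lam = (\<lambda>j. lam j - real_of_int (mval n r a lam) * a j)"

definition admissible :: "nat \<Rightarrow> nat \<Rightarrow> vec \<Rightarrow> vec \<Rightarrow> vec \<Rightarrow> bool" where
  "admissible n r L lam a \<longleftrightarrow> deg n r L (refl_alpha n r a lam) = deg n r L lam + 1"

end

theory Submission
  imports Defs
begin

text \<open>Write \<open>x = \<sigma>\<Lambda>\<close> and \<open>\<alpha> = \<epsilon>\<^sub>i - \<epsilon>\<^sub>j\<close>. Because \<open>\<Lambda>\<close> is strictly dominant with
  \<open>(\<Lambda>, \<theta>) < r\<close>, the coordinates of \<open>x\<close> are pairwise distinct and differ by integers of
  absolute value less than \<open>r\<close>; this makes the expression \<open>\<sigma>\<Lambda> + r\<gamma>\<close> unique and determines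
  \<open>m\<^sub>\<alpha>(\<lambda>)\<close>: it is \<open>x\<^sub>i - x\<^sub>j\<close> if \<open>x\<^sub>i > x\<^sub>j\<close> and \<open>x\<^sub>i - x\<^sub>j + r\<close> otherwise, so that
  \<open>\<lambda>\<^sup>\<alpha> = (t\<^sub>i\<^sub>j\<sigma>)\<Lambda> + r\<gamma>\<close>, resp. \<open>(t\<^sub>i\<^sub>j\<sigma>)\<Lambda> + r(\<gamma> - \<alpha>)\<close> with \<open>|\<gamma> - \<alpha>| = |\<gamma>| - (j - i)\<close>.
  The length of \<open>\<sigma>\<close> is the number of ascents of \<open>x\<close>, and composing with \<open>t\<^sub>i\<^sub>j\<close> changes it
  by \<open>\<plusminus>(1 + 2N)\<close>, where \<open>N\<close> counts the \<open>k\<close> strictly between \<open>i\<close> and \<open>j\<close> with \<open>x\<^sub>k\<close>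
  strictly between \<open>x\<^sub>i\<close> and \<open>x\<^sub>j\<close>. Hence the degree rises by one iff \<open>N = 0\<close> in the first
  case and \<open>N = j - i - 1\<close> in the second; since the decompositions of \<open>\<alpha>\<close> into two positive
  roots are exactly \<open>(\<epsilon>\<^sub>i - \<epsilon>\<^sub>k) + (\<epsilon>\<^sub>k - \<epsilon>\<^sub>j)\<close> with \<open>i < k < j\<close>, these are conditions (i) and (ii).\<close>

section \<open>Roots of type \<open>A\<close>\<close>

lemma ip_eps_diff:
  assumes "i < n" "j < n"
  shows "ip n x (\<lambda>k. eps i k - eps j k) = x i - x j"
proof -
  have "(\<Sum>k<n. x k * eps i k) = x i" if "i < n" for i
    using that by (simp add: eps_def if_distrib cong: if_cong)
  then show ?thesis
    using assms by (simp add: ip_def right_diff_distrib sum_subtractf)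
qed

lemma ip_alpha: "Suc i < n \<Longrightarrow> ip n x (alpha i) = x i - x (Suc i)"
  using ip_eps_diff[of i n "Suc i" x] by (simp add: alpha_def)

lemma ip_theta: "ip n x (theta n) = x 0 - x (n - 1)"
proof -
  have "ip n x (theta n) = (\<Sum>i<n-1. ip n x (alpha i))"
    unfolding ip_def theta_def by (simp add: sum_distrib_left sum.swap[of _ "{..<n}"])
  also have "\<dots> = (\<Sum>i<n-1. x i - x (Suc i))"
    by (intro sum.cong refl ip_alpha) auto
  also have "\<dots> = x 0 - x (n - 1)"
    by (rule sum_lessThan_telescope')
  finally show ?thesis .
qed

lemma apply_transpose_eq_reflection:
  "x (Transposition.transpose i j t) = x t - (x i - x j) * (eps i t - eps j t)"
  by (auto simp: eps_def transpose_def)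

lemma inv_permutes_less:
  "s permutes {..<n} \<Longrightarrow> p < n \<Longrightarrow> inv s p < n"
  using permutes_in_image permutes_inv by fastforce

lemma act_transpose_comp:
  "bij s \<Longrightarrow> act (Transposition.transpose i j \<circ> s) x = act s x \<circ> Transposition.transpose i j"
  by (simp add: act_def o_inv_distrib fun_eq_iff)

lemma eps_diff_eq_sum_cases:
  assumes eq: "\<And>t. eps i t - eps j t = (eps p t - eps q t) + (eps p' t - eps q' t)"
    and ord: "i < j" "p < q" "p' < q'"
  shows "(p = i \<and> q = p' \<and> q' = j) \<or> (p' = i \<and> q' = p \<and> q = j)"
proof (cases "p = i")
  case True
  have "p' \<noteq> i" "q' \<noteq> i"
    using eq[of i] ord True by (auto simp: eps_def split: if_split_asm)
  moreover have "q \<noteq> j"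
  proof
    assume "q = j"
    then have "q \<noteq> p'" "q \<noteq> q'"
      using eq[of q] ord True by (auto simp: eps_def split: if_split_asm)
    with \<open>q = j\<close> \<open>p' \<noteq> i\<close> \<open>q' \<noteq> i\<close> show False
      using eq[of p'] ord True by (auto simp: eps_def split: if_split_asm)
  qed
  ultimately have "q = p'" "q' = j"
    using eq[of q] eq[of q'] ord True by (auto simp: eps_def split: if_split_asm)
  with True show ?thesis by simp
next
  case False
  then have "p = q'" "p \<noteq> j" "p \<noteq> p'"
    using eq[of p] ord by (auto simp: eps_def split: if_split_asm)
  moreover from this have "p' = i"
    using eq[of p'] ord by (auto simp: eps_def split: if_split_asm)
  moreover from calculation have "q = j"
    using eq[of q] ord by (auto simp: eps_def split: if_split_asm)
  ultimately show ?thesis by simp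
qed

lemma eps_diff_in_posroots: "p < q \<Longrightarrow> q < n \<Longrightarrow> (\<lambda>t. eps p t - eps q t) \<in> posroots n"
  unfolding posroots_def by blast

lemma posroot_decomp_iff:
  assumes ij: "i < j" "j < n"
  shows "(\<forall>b\<in>posroots n. \<forall>c\<in>posroots n.
            (\<lambda>t. eps i t - eps j t) = (\<lambda>t. b t + c t) \<longrightarrow> P (ip n x b) (ip n x c))
     \<longleftrightarrow> (\<forall>k. i < k \<and> k < j \<longrightarrow> P (x i - x k) (x k - x j) \<and> P (x k - x j) (x i - x k))"
proof
  assume H: "\<forall>b\<in>posroots n. \<forall>c\<in>posroots n.
               (\<lambda>t. eps i t - eps j t) = (\<lambda>t. b t + c t) \<longrightarrow> P (ip n x b) (ip n x c)"
  show "\<forall>k. i < k \<and> k < j \<longrightarrow> P (x i - x k) (x k - x j) \<and> P (x k - x j) (x i - x k)"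
  proof (intro allI impI)
    fix k assume k: "i < k \<and> k < j"
    define b where "b = (\<lambda>t. eps i t - eps k t)"
    define c where "c = (\<lambda>t. eps k t - eps j t)"
    have roots: "b \<in> posroots n" "c \<in> posroots n"
      using k ij unfolding b_def c_def by (auto intro: eps_diff_in_posroots)
    have "(\<lambda>t. eps i t - eps j t) = (\<lambda>t. b t + c t)" "(\<lambda>t. eps i t - eps j t) = (\<lambda>t. c t + b t)"
      by (simp_all add: b_def c_def)
    moreover have "ip n x b = x i - x k" "ip n x c = x k - x j"
      using k ij by (simp_all add: b_def c_def ip_eps_diff)
    ultimately show "P (x i - x k) (x k - x j) \<and> P (x k - x j) (x i - x k)"
      using H roots by metis
  qed
next
  assume H: "\<forall>k. i < k \<and> k < j \<longrightarrow> P (x i - x k) (x k - x j) \<and> P (x k - x j) (x i - x k)"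
  show "\<forall>b\<in>posroots n. \<forall>c\<in>posroots n.
          (\<lambda>t. eps i t - eps j t) = (\<lambda>t. b t + c t) \<longrightarrow> P (ip n x b) (ip n x c)"
  proof (intro ballI impI)
    fix b c assume "b \<in> posroots n" "c \<in> posroots n" and eq: "(\<lambda>t. eps i t - eps j t) = (\<lambda>t. b t + c t)"
    then obtain p q p' q' where b: "b = (\<lambda>t. eps p t - eps q t)" "p < q" "q < n"
      and c: "c = (\<lambda>t. eps p' t - eps q' t)" "p' < q'" "q' < n"
      unfolding posroots_def by blast
    have "(p = i \<and> q = p' \<and> q' = j) \<or> (p' = i \<and> q' = p \<and> q = j)"
      by (rule eps_diff_eq_sum_cases) (use eq b c ij in \<open>simp_all add: fun_eq_iff\<close>)
    then show "P (ip n x b) (ip n x c)"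
    proof
      assume "p = i \<and> q = p' \<and> q' = j"
      then show ?thesis using H[rule_format, of q] b c ij by (simp add: ip_eps_diff)
    next
      assume "p' = i \<and> q' = p \<and> q = j"
      then show ?thesis using H[rule_format, of p] b c ij by (simp add: ip_eps_diff)
    qed
  qed
qed

section \<open>The weight lattice, the root lattice and \<open>m\<^sub>\<alpha>\<close>\<close>

lemma Pl_diff_Ints:
  assumes "L \<in> Pl n" "p < n" "q < n"
  shows "L p - L q \<in> \<int>"
proof -
  obtain c :: "nat \<Rightarrow> int" where L: "L = (\<lambda>j. \<Sum>i<n. of_int (c i) * epsbar n i j)"
    using assms(1) unfolding Pl_def by blast
  have "L p = of_int (c p) - (\<Sum>i<n. of_int (c i)) / real n" if "p < n" for p
  proof -
    have "(\<Sum>k<n. eps k p) = 1" "(\<Sum>i<n. of_int (c i) * eps i p) = (of_int (c p) :: real)"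
      using that by (simp_all add: eps_def if_distrib cong: if_cong)
    then have "L p = (\<Sum>i<n. of_int (c i) * eps i p - of_int (c i) / real n)"
      by (simp add: L epsbar_def algebra_simps)
    also have "\<dots> = of_int (c p) - (\<Sum>i<n. of_int (c i)) / real n"
      using \<open>(\<Sum>i<n. of_int (c i) * eps i p) = of_int (c p)\<close>
      by (simp add: sum_subtractf sum_divide_distrib)
    finally show ?thesis .
  qed
  then have "L p - L q = of_int (c p - c q)"
    using assms by simp
  then show ?thesis by simp
qed

lemma Ql_Ints: "g \<in> Ql n \<Longrightarrow> g j \<in> \<int>"
  unfolding Ql_def alpha_def eps_def by (auto intro!: Ints_mult Ints_diff)

lemma alpha_lincomb_apply:
  fixes f :: "nat \<Rightarrow> real"
  assumes "j < m"
  shows "(\<Sum>i<m. f i * alpha i j) = f j - (if j = 0 then 0 else f (j - 1))"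
proof -
  have "(\<Sum>i<m. f i * eps (Suc i) j) = (if j = 0 then 0 else f (j - 1))"
    using assms by (cases j) (simp_all add: eps_def if_distrib cong: if_cong)
  moreover have "(\<Sum>i<m. f i * eps i j) = f j"
    using assms by (simp add: eps_def if_distrib cong: if_cong)
  ultimately show ?thesis
    by (simp add: alpha_def right_diff_distrib sum_subtractf)
qed

lemma alpha_linear_independent:
  fixes f :: "nat \<Rightarrow> real"
  assumes "\<And>j. (\<Sum>i<m. f i * alpha i j) = 0" and "j < m"
  shows "f j = 0"
  using assms(2)
proof (induction j)
  case 0
  then show ?case using assms(1)[of 0] alpha_lincomb_apply[of 0 m f] by simp
next
  case (Suc k)
  then show ?case using assms(1)[of "Suc k"] alpha_lincomb_apply[of "Suc k" m f] by simp
qed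

lemma qheight_lincomb:
  "qheight n (\<lambda>j. \<Sum>i<n-1. of_int (c i) * alpha i j) = (\<Sum>i<n-1. c i)"
  unfolding qheight_def
proof (rule the_equality)
  fix h assume "\<exists>c'. (\<lambda>j. \<Sum>i<n-1. of_int (c i) * alpha i j) = (\<lambda>j. \<Sum>i<n-1. of_int (c' i) * alpha i j)
                  \<and> h = (\<Sum>i<n-1. c' i)"
  then obtain c' where eq: "\<And>j. (\<Sum>i<n-1. of_int (c i) * alpha i j) = (\<Sum>i<n-1. of_int (c' i) * alpha i j)"
    and h: "h = (\<Sum>i<n-1. c' i)"
    by (metis (mono_tags))
  have "(\<Sum>i<n-1. (of_int (c i) - of_int (c' i)) * alpha i j) = 0" for j
    using eq[of j] by (simp add: left_diff_distrib sum_subtractf)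
  then have "of_int (c j) - of_int (c' j) = (0::real)" if "j < n - 1" for j
    using that by (rule alpha_linear_independent)
  then show "h = (\<Sum>i<n-1. c i)"
    using h by simp
qed auto

lemma eps_diff_eq_alpha_lincomb:
  assumes "i < j" "j < n"
  shows "eps i t - eps j t = (\<Sum>k<n-1. of_int (of_bool (i \<le> k \<and> k < j)) * alpha k t)"
proof -
  have "(\<Sum>k<n-1. of_int (of_bool (i \<le> k \<and> k < j)) * alpha k t) = (\<Sum>k\<in>{i..<j}. alpha k t)"
    using assms by (intro sum.mono_neutral_cong_right) auto
  also have "\<dots> = eps i t - eps j t"
    using sum_Suc_diff'[of i j "\<lambda>k. - eps k t"] assms by (simp add: alpha_def)
  finally show ?thesis by simp
qed

lemma Ql_minus_eps_diff:
  assumes g: "g \<in> Ql n" and ij: "i < j" "j < n"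
  shows "(\<lambda>t. g t - (eps i t - eps j t)) \<in> Ql n"
    and "qheight n (\<lambda>t. g t - (eps i t - eps j t)) = qheight n g - int (j - i)"
proof -
  obtain c :: "nat \<Rightarrow> int" where c: "g = (\<lambda>t. \<Sum>k<n-1. of_int (c k) * alpha k t)"
    using g unfolding Ql_def by blast
  define c' where "c' k = c k - of_bool (i \<le> k \<and> k < j)" for k
  have g': "(\<lambda>t. g t - (eps i t - eps j t)) = (\<lambda>t. \<Sum>k<n-1. of_int (c' k) * alpha k t)"
    by (simp add: c c'_def eps_diff_eq_alpha_lincomb[OF ij] fun_eq_iff left_diff_distrib sum_subtractf)
  then show "(\<lambda>t. g t - (eps i t - eps j t)) \<in> Ql n"
    unfolding Ql_def by blast
  have "(\<Sum>k<n-1. of_bool (i \<le> k \<and> k < j) :: int) = int (j - i)"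
  proof -
    have "{..<n-1} \<inter> {k. i \<le> k \<and> k < j} = {i..<j}" using ij by auto
    then show ?thesis by simp
  qed
  moreover have "qheight n g = (\<Sum>k<n-1. c k)"
    unfolding c by (rule qheight_lincomb)
  ultimately show "qheight n (\<lambda>t. g t - (eps i t - eps j t)) = qheight n g - int (j - i)"
    unfolding g' qheight_lincomb by (simp add: c'_def sum_subtractf del: sum_of_bool_eq)
qed

lemma mval_eqI:
  assumes "0 < m" "m < int r" "ip n lam a = of_int m + of_int k * real r"
  shows "mval n r a lam = m"
  unfolding mval_def
proof (rule the_equality)
  fix m' assume "0 < m' \<and> m' < int r \<and> (\<exists>k::int. ip n lam a = of_int m' + of_int k * real r)"
  then obtain k' :: int where m': "0 < m'" "m' < int r" "ip n lam a = of_int m' + of_int k' * real r"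
    by blast
  have "of_int (m - m') = (of_int ((k' - k) * int r) :: real)"
    using m'(3) assms(3) by (simp add: algebra_simps)
  then have "m - m' = (k' - k) * int r"
    by linarith
  moreover have "\<bar>m - m'\<bar> < int r"
    using m'(1,2) assms(1,2) by linarith
  ultimately have "\<bar>k' - k\<bar> * int r < 1 * int r"
    by (simp add: abs_mult)
  then have "\<bar>k' - k\<bar> < 1"
    by (rule mult_right_less_imp_less) simp
  then show "m' = m"
    using \<open>m - m' = (k' - k) * int r\<close> by simp
qed (use assms in auto)

section \<open>Ascents and the length of a permutation\<close>

definition ascent_count :: "nat \<Rightarrow> vec \<Rightarrow> int" where
  "ascent_count n x = (\<Sum>p<n. \<Sum>q<n. of_bool (p < q \<and> x p < x q))"

lemma sum_sum_permute:
  assumes "t permutes S"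
  shows "(\<Sum>p\<in>S. \<Sum>q\<in>S. f (t p) (t q)) = (\<Sum>p\<in>S. \<Sum>q\<in>S. f p q)"
proof -
  have "(\<Sum>q\<in>S. f p (t q)) = (\<Sum>q\<in>S. f p q)" for p
    using sum.permute[OF assms, of "f p"] by (simp add: comp_def)
  then show ?thesis
    using sum.permute[OF assms, of "\<lambda>p. \<Sum>q\<in>S. f p q"] by (simp add: comp_def)
qed

lemma sum_sum_split_cross:
  fixes T :: "nat \<Rightarrow> nat \<Rightarrow> int"
  assumes "finite S" "E \<subseteq> S" and vanish: "\<And>p q. p \<notin> E \<Longrightarrow> q \<notin> E \<Longrightarrow> T p q = 0"
  shows "(\<Sum>p\<in>S. \<Sum>q\<in>S. T p q)
       = (\<Sum>p\<in>E. \<Sum>q\<in>E. T p q) + (\<Sum>k\<in>S-E. (\<Sum>p\<in>E. T p k) + (\<Sum>q\<in>E. T k q))"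
proof -
  have split: "(\<Sum>p\<in>S. f p) = (\<Sum>p\<in>E. f p) + (\<Sum>p\<in>S-E. f p)" for f :: "nat \<Rightarrow> int"
    using sum.subset_diff[OF assms(2,1), of f] by simp
  have "(\<Sum>p\<in>S. \<Sum>q\<in>S. T p q) = (\<Sum>p\<in>E. \<Sum>q\<in>S. T p q) + (\<Sum>p\<in>S-E. \<Sum>q\<in>S. T p q)"
    by (rule split)
  also have "(\<Sum>p\<in>E. \<Sum>q\<in>S. T p q) = (\<Sum>p\<in>E. \<Sum>q\<in>E. T p q) + (\<Sum>p\<in>E. \<Sum>q\<in>S-E. T p q)"
    by (simp only: split sum.distrib)
  also have "(\<Sum>p\<in>E. \<Sum>q\<in>S-E. T p q) = (\<Sum>q\<in>S-E. \<Sum>p\<in>E. T p q)"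
    by (rule sum.swap)
  also have "(\<Sum>p\<in>S-E. \<Sum>q\<in>S. T p q) = (\<Sum>p\<in>S-E. \<Sum>q\<in>E. T p q)"
  proof (rule sum.cong[OF refl])
    fix p assume "p \<in> S - E"
    then have "(\<Sum>q\<in>S-E. T p q) = 0"
      using vanish by (intro sum.neutral) auto
    then show "(\<Sum>q\<in>S. T p q) = (\<Sum>q\<in>E. T p q)"
      using split[of "T p"] by simp
  qed
  finally show ?thesis
    by (simp only: sum.distrib add.assoc)
qed

lemma ascent_count_transpose:
  assumes inj: "inj_on x {..<n}" and ij: "i < j" "j < n" and desc: "x j < x i"
  shows "ascent_count n (x \<circ> Transposition.transpose i j)
       = ascent_count n x + 1 + 2 * int (card {k. i < k \<and> k < j \<and> x j < x k \<and> x k < x i})"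
proof -
  define \<tau> where "\<tau> = Transposition.transpose i j"
  define M where "M = {k. i < k \<and> k < j \<and> x j < x k \<and> x k < x i}"
  define T where "T p q = (of_bool (\<tau> p < \<tau> q \<and> x p < x q) - of_bool (p < q \<and> x p < x q) :: int)"
    for p q
  have \<tau>: "\<tau> permutes {..<n}"
    unfolding \<tau>_def using ij by (intro permutes_swap_id) auto
  have "ascent_count n (x \<circ> \<tau>) = (\<Sum>p<n. \<Sum>q<n. of_bool (\<tau> (\<tau> p) < \<tau> (\<tau> q) \<and> x (\<tau> p) < x (\<tau> q)))"
    by (simp add: ascent_count_def \<tau>_def)
  also have "\<dots> = (\<Sum>p<n. \<Sum>q<n. of_bool (\<tau> p < \<tau> q \<and> x p < x q))"
    by (rule sum_sum_permute[OF \<tau>, of "\<lambda>p q. of_bool (\<tau> p < \<tau> q \<and> x p < x q)"])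
  finally have "ascent_count n (x \<circ> \<tau>) - ascent_count n x = (\<Sum>p<n. \<Sum>q<n. T p q)"
    by (simp add: ascent_count_def T_def sum_subtractf)
  \<comment> \<open>only pairs meeting \<open>{i, j}\<close> change status\<close>
  also have "\<dots> = (\<Sum>p\<in>{i,j}. \<Sum>q\<in>{i,j}. T p q)
                  + (\<Sum>k\<in>{..<n}-{i,j}. (\<Sum>p\<in>{i,j}. T p k) + (\<Sum>q\<in>{i,j}. T k q))"
    using ij by (intro sum_sum_split_cross) (simp_all add: T_def \<tau>_def)
  also have "(\<Sum>p\<in>{i,j}. \<Sum>q\<in>{i,j}. T p q) = 1"
    using ij desc by (simp add: T_def \<tau>_def)
  also have "(\<Sum>k\<in>{..<n}-{i,j}. (\<Sum>p\<in>{i,j}. T p k) + (\<Sum>q\<in>{i,j}. T k q))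
           = (\<Sum>k\<in>{..<n}-{i,j}. 2 * of_bool (k \<in> M))"
  proof (rule sum.cong[OF refl])
    fix k assume k: "k \<in> {..<n} - {i,j}"
    then have "x k \<noteq> x i" "x k \<noteq> x j"
      using ij inj unfolding inj_on_def by auto
    with k ij desc show "(\<Sum>p\<in>{i,j}. T p k) + (\<Sum>q\<in>{i,j}. T k q) = 2 * of_bool (k \<in> M)"
      by (auto simp: T_def \<tau>_def M_def)
  qed
  also have "\<dots> = 2 * int (card M)"
  proof -
    have "({..<n} - {i,j}) \<inter> M = M" using ij by (auto simp: M_def)
    then show ?thesis by (simp add: sum_distrib_left[symmetric])
  qed
  finally show ?thesis
    unfolding \<tau>_def M_def by linarith
qed

lemma perm_length_eq_sum:
  "int (perm_length n s) = (\<Sum>p<n. \<Sum>q<n. of_bool (p < q \<and> s q < s p))"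
proof -
  have "{(p, q). p < q \<and> q < n \<and> s q < s p} = ({..<n} \<times> {..<n}) \<inter> {(p, q). p < q \<and> s q < s p}"
    by auto
  then have "int (perm_length n s) = (\<Sum>(p, q)\<in>{..<n} \<times> {..<n}. of_bool (p < q \<and> s q < s p))"
    unfolding perm_length_def by (simp add: sum_of_bool_eq case_prod_unfold)
  then show ?thesis
    by (simp add: sum.cartesian_product del: sum_of_bool_eq)
qed

lemma perm_length_eq_ascent_count:
  assumes s: "s permutes {..<n}" and decr: "\<And>p q. p < q \<Longrightarrow> q < n \<Longrightarrow> L q < L p"
  shows "int (perm_length n s) = ascent_count n (act s L)"
proof -
  define t where "t = inv s"
  have t: "t permutes {..<n}"
    unfolding t_def using s by (rule permutes_inv)
  have st: "s (t p) = p" for p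
    unfolding t_def using s by (simp add: permutes_inverses)
  have "int (perm_length n s) = (\<Sum>p<n. \<Sum>q<n. of_bool (t p < t q \<and> s (t q) < s (t p)))"
    unfolding perm_length_eq_sum
    by (rule sum_sum_permute[OF t, of "\<lambda>p q. of_bool (p < q \<and> s q < s p)", symmetric])
  also have "\<dots> = (\<Sum>q<n. \<Sum>p<n. of_bool (t p < t q \<and> q < p))"
    unfolding st by (rule sum.swap)
  also have "\<dots> = (\<Sum>q<n. \<Sum>p<n. of_bool (q < p \<and> L (t q) < L (t p)))"
  proof (intro sum.cong refl)
    fix p q assume "q \<in> {..<n}" "p \<in> {..<n}"
    then have "t p < n" "t q < n"
      using permutes_in_image[OF t] by auto
    then have "t p < t q \<longleftrightarrow> L (t q) < L (t p)"
      using decr[of "t p" "t q"] decr[of "t q" "t p"] by (cases "t p" "t q" rule: linorder_cases) auto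
    then show "of_bool (t p < t q \<and> q < p) = (of_bool (q < p \<and> L (t q) < L (t p)) :: int)"
      by auto
  qed
  finally show ?thesis
    by (simp add: ascent_count_def act_def t_def)
qed

section \<open>The affine orbit of a strictly dominant weight\<close>

locale dominant_weight =
  fixes n r :: nat and L :: vec
  assumes L_in_Pl: "L \<in> Pl n"
    and L_dominant: "\<forall>i < n - 1. ip n L (alpha i) > 0"
    and L_theta_less: "ip n L (theta n) < real r"
begin

lemma L_strict_decreasing: "p < q \<Longrightarrow> q < n \<Longrightarrow> L q < L p"
proof (induction q)
  case (Suc q)
  have "0 < ip n L (alpha q)"
    using L_dominant Suc.prems(2) by simp
  then have "L (Suc q) < L q"
    using ip_alpha[of q n L] Suc.prems(2) by simp
  then show ?case
    using Suc by (cases "p = q") auto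
qed simp

lemma L_eq_iff: "p < n \<Longrightarrow> q < n \<Longrightarrow> L p = L q \<longleftrightarrow> p = q"
  using L_strict_decreasing by (cases p q rule: linorder_cases) fastforce+

lemma L_decreasing: "p \<le> q \<Longrightarrow> q < n \<Longrightarrow> L q \<le> L p"
  using L_strict_decreasing by (cases "p = q") (auto intro: less_imp_le)

lemma L_diff_le_theta:
  assumes "p < n" "q < n"
  shows "\<bar>L p - L q\<bar> \<le> ip n L (theta n)"
proof -
  have "L (n - 1) \<le> L p" "L p \<le> L 0" "L (n - 1) \<le> L q" "L q \<le> L 0"
    using assms by (auto intro: L_decreasing)
  then show ?thesis
    by (simp add: ip_theta abs_le_iff)
qed

lemma r_pos: "0 < r"
proof -
  have "0 \<le> ip n L (theta n)"
    using L_diff_le_theta[of 0 0] by (cases "n = 0") (auto simp: ip_def)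
  then show ?thesis
    using L_theta_less by simp
qed

lemma L_diff_less: "p < n \<Longrightarrow> q < n \<Longrightarrow> \<bar>L p - L q\<bar> < real r"
  using L_diff_le_theta L_theta_less by fastforce

lemma act_diff_Ints:
  "s permutes {..<n} \<Longrightarrow> p < n \<Longrightarrow> q < n \<Longrightarrow> act s L p - act s L q \<in> \<int>"
  unfolding act_def by (intro Pl_diff_Ints[OF L_in_Pl] inv_permutes_less)

lemma act_diff_less:
  "s permutes {..<n} \<Longrightarrow> p < n \<Longrightarrow> q < n \<Longrightarrow> \<bar>act s L p - act s L q\<bar> < real r"
  unfolding act_def by (intro L_diff_less inv_permutes_less)

lemma inj_on_act:
  assumes s: "s permutes {..<n}"
  shows "inj_on (act s L) {..<n}"
proof (rule inj_onI)
  fix p q assume "p \<in> {..<n}" "q \<in> {..<n}" "act s L p = act s L q"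
  then have "inv s p = inv s q"
    using L_eq_iff inv_permutes_less[OF s] by (simp add: act_def)
  then show "p = q"
    using permutes_inverses(1)[OF s] by metis
qed

lemma orbit_unique:
  assumes s: "s permutes {..<n}" and s': "s' permutes {..<n}"
    and g: "g \<in> Ql n" and g': "g' \<in> Ql n"
    and eq: "(\<lambda>t. act s L t + real r * g t) = (\<lambda>t. act s' L t + real r * g' t)"
  shows "s = s'" and "g = g'"
proof -
  have "inv s p = inv s' p" for p
  proof (cases "p < n")
    case True
    then have lt: "inv s p < n" "inv s' p < n"
      using s s' by (simp_all add: inv_permutes_less)
    have diff: "L (inv s p) - L (inv s' p) = real r * (g' p - g p)"
      using fun_cong[OF eq, of p] by (simp add: act_def algebra_simps)
    have "\<bar>g' p - g p\<bar> < 1"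
      using L_diff_less[OF lt] r_pos by (simp add: diff abs_mult)
    moreover have "g' p - g p \<in> \<int>"
      using Ql_Ints[OF g] Ql_Ints[OF g'] by simp
    ultimately have "g' p - g p = 0"
      by (rule Ints_nonzero_abs_less1[rotated])
    then show ?thesis
      using diff L_eq_iff[OF lt] by simp
  next
    case False
    then show ?thesis
      using permutes_not_in[OF permutes_inv[OF s]] permutes_not_in[OF permutes_inv[OF s']] by simp
  qed
  then have "inv s = inv s'" ..
  then show "s = s'"
    using permutes_inv_inv[OF s] permutes_inv_inv[OF s'] by metis
  show "g = g'"
  proof
    fix t show "g t = g' t"
      using fun_cong[OF eq, of t] \<open>s = s'\<close> r_pos by simp
  qed
qed

lemma deg_orbit:
  assumes "s permutes {..<n}" "g \<in> Ql n"
  shows "deg n r L (\<lambda>t. act s L t + real r * g t) = int (perm_length n s) - 2 * qheight n g"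
  unfolding deg_def
proof (rule the_equality)
  fix d assume "\<exists>s' g'. s' permutes {..<n} \<and> g' \<in> Ql n \<and>
      (\<lambda>t. act s L t + real r * g t) = (\<lambda>t. act s' L t + real r * g' t) \<and>
      d = int (perm_length n s') - 2 * qheight n g'"
  then show "d = int (perm_length n s) - 2 * qheight n g"
    using orbit_unique[OF assms(1) _ assms(2)] by blast
qed (use assms in blast)

lemma perm_length_eq_ascent_count_act:
  "s permutes {..<n} \<Longrightarrow> int (perm_length n s) = ascent_count n (act s L)"
  by (rule perm_length_eq_ascent_count) (use L_strict_decreasing in auto)

lemma refl_alpha_orbit_pos:
  assumes s: "s permutes {..<n}" and g: "g \<in> Ql n" and ij: "i < j" "j < n"
    and lt: "act s L j < act s L i"
  shows "refl_alpha n r (\<lambda>t. eps i t - eps j t) (\<lambda>t. act s L t + real r * g t)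
       = (\<lambda>t. act (Transposition.transpose i j \<circ> s) L t + real r * g t)"
proof -
  obtain m :: int where m: "act s L i - act s L j = of_int m"
    using act_diff_Ints[OF s] ij by (meson Ints_cases less_trans)
  obtain k :: int where k: "g i - g j = of_int k"
    using Ql_Ints[OF g] by (meson Ints_cases Ints_diff)
  have "mval n r (\<lambda>t. eps i t - eps j t) (\<lambda>t. act s L t + real r * g t) = m"
  proof (rule mval_eqI)
    show "0 < m"
      using lt m by simp
    show "m < int r"
      using act_diff_less[OF s, of i j] ij m by simp
    show "ip n (\<lambda>t. act s L t + real r * g t) (\<lambda>t. eps i t - eps j t) = of_int m + of_int k * real r"
      using ij m k by (simp add: ip_eps_diff algebra_simps)
  qed
  then show ?thesis
    by (simp add: refl_alpha_def act_transpose_comp[OF permutes_bij[OF s]]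
        apply_transpose_eq_reflection m[symmetric] fun_eq_iff)
qed

lemma refl_alpha_orbit_neg:
  assumes s: "s permutes {..<n}" and g: "g \<in> Ql n" and ij: "i < j" "j < n"
    and lt: "act s L i < act s L j"
  shows "refl_alpha n r (\<lambda>t. eps i t - eps j t) (\<lambda>t. act s L t + real r * g t)
       = (\<lambda>t. act (Transposition.transpose i j \<circ> s) L t + real r * (g t - (eps i t - eps j t)))"
proof -
  obtain m :: int where m: "act s L i - act s L j = of_int m"
    using act_diff_Ints[OF s] ij by (meson Ints_cases less_trans)
  obtain k :: int where k: "g i - g j = of_int k"
    using Ql_Ints[OF g] by (meson Ints_cases Ints_diff)
  have "mval n r (\<lambda>t. eps i t - eps j t) (\<lambda>t. act s L t + real r * g t) = m + int r"
  proof (rule mval_eqI)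
    show "0 < m + int r"
      using act_diff_less[OF s, of i j] ij m by simp
    show "m + int r < int r"
      using lt m by simp
    show "ip n (\<lambda>t. act s L t + real r * g t) (\<lambda>t. eps i t - eps j t)
        = of_int (m + int r) + of_int (k - 1) * real r"
      using ij m k by (simp add: ip_eps_diff algebra_simps)
  qed
  then show ?thesis
    by (simp add: refl_alpha_def act_transpose_comp[OF permutes_bij[OF s]]
        apply_transpose_eq_reflection m[symmetric] fun_eq_iff algebra_simps)
qed

lemma admissible_iff_pos:
  assumes s: "s permutes {..<n}" and g: "g \<in> Ql n" and ij: "i < j" "j < n"
    and lt: "act s L j < act s L i"
  shows "admissible n r L (\<lambda>t. act s L t + real r * g t) (\<lambda>t. eps i t - eps j t)
     \<longleftrightarrow> (\<forall>k. i < k \<and> k < j \<longrightarrow> act s L i < act s L k \<or> act s L k < act s L j)"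
proof -
  define x where "x = act s L"
  define \<tau> where "\<tau> = Transposition.transpose i j"
  define M where "M = {k. i < k \<and> k < j \<and> x j < x k \<and> x k < x i}"
  have \<tau>s: "\<tau> \<circ> s permutes {..<n}"
    unfolding \<tau>_def using ij by (intro permutes_compose[OF s] permutes_swap_id) auto
  have x\<tau>: "act (\<tau> \<circ> s) L = x \<circ> \<tau>"
    unfolding x_def \<tau>_def by (rule act_transpose_comp[OF permutes_bij[OF s]])
  have "admissible n r L (\<lambda>t. act s L t + real r * g t) (\<lambda>t. eps i t - eps j t)
      \<longleftrightarrow> int (perm_length n (\<tau> \<circ> s)) = int (perm_length n s) + 1"
    unfolding admissible_def refl_alpha_orbit_pos[OF assms, folded \<tau>_def]
    by (simp add: deg_orbit[OF s g] deg_orbit[OF \<tau>s g])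
  also have "\<dots> \<longleftrightarrow> ascent_count n (x \<circ> \<tau>) = ascent_count n x + 1"
    by (simp add: perm_length_eq_ascent_count_act[OF s] perm_length_eq_ascent_count_act[OF \<tau>s] x\<tau> x_def)
  also have "\<dots> \<longleftrightarrow> card M = 0"
    using ascent_count_transpose[OF inj_on_act[OF s] ij lt]
    unfolding x_def[symmetric] \<tau>_def[symmetric] M_def[symmetric] by simp
  also have "\<dots> \<longleftrightarrow> M = {}"
    by (simp add: M_def)
  also have "\<dots> \<longleftrightarrow> (\<forall>k. i < k \<and> k < j \<longrightarrow> x i < x k \<or> x k < x j)"
  proof -
    have "x k \<noteq> x i" "x k \<noteq> x j" if "i < k" "k < j" for k
      using inj_on_act[OF s] that ij unfolding x_def inj_on_def by (metis lessThan_iff less_trans less_irrefl)+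
    then show ?thesis
      unfolding M_def by force
  qed
  finally show ?thesis
    unfolding x_def .
qed

lemma admissible_iff_neg:
  assumes s: "s permutes {..<n}" and g: "g \<in> Ql n" and ij: "i < j" "j < n"
    and lt: "act s L i < act s L j"
  shows "admissible n r L (\<lambda>t. act s L t + real r * g t) (\<lambda>t. eps i t - eps j t)
     \<longleftrightarrow> (\<forall>k. i < k \<and> k < j \<longrightarrow> act s L i < act s L k \<and> act s L k < act s L j)"
proof -
  define x where "x = act s L"
  define \<tau> where "\<tau> = Transposition.transpose i j"
  define g' where "g' = (\<lambda>t. g t - (eps i t - eps j t))"
  define M where "M = {k. i < k \<and> k < j \<and> x i < x k \<and> x k < x j}"
  have \<tau>s: "\<tau> \<circ> s permutes {..<n}"
    unfolding \<tau>_def using ij by (intro permutes_compose[OF s] permutes_swap_id) auto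
  have x\<tau>: "act (\<tau> \<circ> s) L = x \<circ> \<tau>"
    unfolding x_def \<tau>_def by (rule act_transpose_comp[OF permutes_bij[OF s]])
  have g': "g' \<in> Ql n" "qheight n g' = qheight n g - int (j - i)"
    unfolding g'_def by (rule Ql_minus_eps_diff[OF g ij])+
  have ascents: "ascent_count n x = ascent_count n (x \<circ> \<tau>) + 1 + 2 * int (card M)"
  proof -
    have "inj_on (x \<circ> \<tau>) {..<n}"
      using inj_on_act[OF \<tau>s] by (simp add: x\<tau>)
    moreover have "(x \<circ> \<tau>) j < (x \<circ> \<tau>) i"
      using lt by (simp add: x_def \<tau>_def)
    ultimately have "ascent_count n (x \<circ> \<tau> \<circ> \<tau>) = ascent_count n (x \<circ> \<tau>) + 1
        + 2 * int (card {k. i < k \<and> k < j \<and> (x \<circ> \<tau>) j < (x \<circ> \<tau>) k \<and> (x \<circ> \<tau>) k < (x \<circ> \<tau>) i})"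
      unfolding \<tau>_def using ij by (intro ascent_count_transpose)
    moreover have "{k. i < k \<and> k < j \<and> (x \<circ> \<tau>) j < (x \<circ> \<tau>) k \<and> (x \<circ> \<tau>) k < (x \<circ> \<tau>) i} = M"
      by (auto simp: M_def \<tau>_def)
    ultimately show ?thesis
      by (simp add: \<tau>_def comp_assoc)
  qed
  have M_sub: "M \<subseteq> {i<..<j}"
    by (auto simp: M_def)
  have "admissible n r L (\<lambda>t. act s L t + real r * g t) (\<lambda>t. eps i t - eps j t)
      \<longleftrightarrow> int (perm_length n (\<tau> \<circ> s)) - 2 * qheight n g' = int (perm_length n s) - 2 * qheight n g + 1"
  proof -
    have "refl_alpha n r (\<lambda>t. eps i t - eps j t) (\<lambda>t. act s L t + real r * g t)
        = (\<lambda>t. act (\<tau> \<circ> s) L t + real r * g' t)"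
      unfolding refl_alpha_orbit_neg[OF assms] by (simp add: \<tau>_def g'_def)
    then show ?thesis
      by (simp add: admissible_def deg_orbit[OF s g] deg_orbit[OF \<tau>s g'(1)])
  qed
  also have "\<dots> \<longleftrightarrow> int (card M) = int (j - i) - 1"
    using ascents g'(2)
    by (simp add: perm_length_eq_ascent_count_act[OF s] perm_length_eq_ascent_count_act[OF \<tau>s] x\<tau> x_def)
      arith
  also have "\<dots> \<longleftrightarrow> card M = card {i<..<j}"
    using ij by auto
  also have "\<dots> \<longleftrightarrow> M = {i<..<j}"
    using card_subset_eq[OF finite_greaterThanLessThan M_sub] by auto
  also have "\<dots> \<longleftrightarrow> (\<forall>k. i < k \<and> k < j \<longrightarrow> x i < x k \<and> x k < x j)"
    using M_sub by (auto simp: M_def)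
  finally show ?thesis
    unfolding x_def .
qed

end

theorem lemmaA3:
  fixes n r :: nat and L :: vec and s :: "nat \<Rightarrow> nat" and g a :: vec
  assumes "n \<ge> 2" and "r \<ge> n + 2"
    and "L \<in> Pl n"
    and "\<forall>i < n - 1. ip n L (alpha i) > 0"
    and "ip n L (theta n) < real r"
    and "s permutes {..<n}" and "g \<in> Ql n"
    and "a \<in> posroots n"
  shows "admissible n r L (\<lambda>j. act s L j + real r * g j) a \<longleftrightarrow>
    ((ip n (act s L) a > 0 \<and>
      (\<forall>b\<in>posroots n. \<forall>c\<in>posroots n. a = (\<lambda>j. b j + c j) \<longrightarrow>
         ip n (act s L) b < 0 \<or> ip n (act s L) c < 0))
   \<or> (ip n (act s L) a < 0 \<and>
      (\<forall>b\<in>posroots n. \<forall>c\<in>posroots n. a = (\<lambda>j. b j + c j) \<longrightarrow>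
         ip n (act s L) b < 0 \<and> ip n (act s L) c < 0)))"
proof -
  interpret dominant_weight n r L
    using assms(3-5) by unfold_locales
  obtain i j where a: "a = (\<lambda>t. eps i t - eps j t)" and ij: "i < j" "j < n"
    using assms(8) unfolding posroots_def by blast
  define x where "x = act s L"
  have ip_a: "ip n x a = x i - x j"
    unfolding a using ij by (simp add: ip_eps_diff)
  have "x i \<noteq> x j"
    using inj_on_act[OF assms(6)] ij unfolding x_def inj_on_def by (metis lessThan_iff less_trans less_irrefl)
  then consider "x j < x i" | "x i < x j"
    by linarith
  then show ?thesis
  proof cases
    case 1
    then show ?thesis
      using admissible_iff_pos[OF assms(6,7) ij] posroot_decomp_iff[OF ij, of "\<lambda>u v. u < 0 \<or> v < 0" x]
      unfolding a[symmetric] x_def[symmetric] ip_a by auto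
  next
    case 2
    then show ?thesis
      using admissible_iff_neg[OF assms(6,7) ij] posroot_decomp_iff[OF ij, of "\<lambda>u v. u < 0 \<and> v < 0" x]
      unfolding a[symmetric] x_def[symmetric] ip_a by auto
  qed
qed

end
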